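(* Let $V_0,\dots,V_{2^n}$ be the $2^n+1$ unitary operators that simultaneously diagonalize the $2^n+1$ maximally commuting subsets $S_j$ of non-identity $n$-qubit Pauli operators, i.e. $S_j = \{ s_{j,\vec a} V_j Z_{\vec a} V_j^\dagger : \vec a \in\{0,1\}^n, \vec a\neq \vec 0\}$ with signs $s_{j,\vec a}\in\{-1,1\}$. Let $\mathcal{V} = \{((2^n+1)^{-1}, V_j^\dagger)\}_{j=0}^{2^n}$ be the uniform ensemble over the adjoint unitaries. Let $\mathcal{M}$ be the measure-and-prepare channel $$\mathcal{M}(\rho) = \sum_{\vec k\in\{0,1\}^n} \mathrm{tr}\big[|\vec k\rangle\langle \vec k|\,\rho\big]\,\rho_{\vec k},\qquad \rho_{\vec k} = \sum_{\vec l\in\{0,1\}^n} \frac{1-\delta_{\vec k,\vec l}}{2^n-1}\,|\vec l\rangle\langle \vec l|,$$ which measures in the computational basis and, upon outcome $|\vec k\rangle$, prepares the uniform mixture over all computational basis states orthogonal to $|\vec k\rangle$. Then the $n$-qubit depolarizing channel with zero entanglement fidelity, $$\mathcal{D}_0(\rho) = \frac{1}{2^{2n}-1}\sum_{P\in\mathcal{Q}_n^*} P\rho P,$$ satisfies $\mathcal{D}_0 = \mathbb{E}_{\mathcal{V}}(\mathcal{M})$, where $\mathbb{E}_{\mathcal{V}}(\mathcal{M})(\rho) = \frac{1}{2^n+1}\sum_{j=0}^{2^n} V_j\,\mathcal{M}(V_j^\dagger \rho V_j)\,V_j^\dagger$. Moreover, this construction (a mixture of $2^n+1$ measure-and-prepare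 circuits) uses the minimal number of measure-and-prepare circuits required to realize $\mathcal{D}_0$ without ancilla qubits.
   Context: $\mathcal{Q}_n$ denotes the $n$-qubit Pauli operators modulo phase (a basis of operators on $n$ qubits), and $\mathcal{Q}_n^* = \mathcal{Q}_n\setminus\{I^{\otimes n}\}$. $Z_{\vec a} = \bigotimes_i Z^{a_i}$. The set $\mathcal{Q}_n^*$ is partitioned into $2^n+1$ disjoint maximally commuting subsets $S_j$, each of size $2^n-1$. For an ensemble $\mathcal{E}=\{(p_i,U_i)\}$, the $\mathcal{E}$-channel-twirl of a channel $\mathcal{C}$ is $\rho\mapsto \sum_i p_i U_i^\dagger \mathcal{C}(U_i\rho U_i^\dagger) U_i$. *)

theory Defs
  imports "Jordan_Normal_Form.Schur_Decomposition"
begin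

(* Qubit convention: a computational basis index r < 2^n encodes the bit string
   (bit 0 r, ..., bit (n-1) r); qubit i corresponds to bit i. *)
definition qbit :: "nat \<Rightarrow> nat \<Rightarrow> nat" where
  "qbit i r = (r div 2 ^ i) mod 2"

(* single-qubit Paulis: 0 = I, 1 = X, 2 = Y, 3 = Z *)
definition pauli1 :: "nat \<Rightarrow> complex mat" where
  "pauli1 k = (if k = 1 then mat_of_rows_list 2 [[0, 1], [1, 0]]
    else if k = 2 then mat_of_rows_list 2 [[0, -\<i>], [\<i>, 0]]
    else if k = 3 then mat_of_rows_list 2 [[1, 0], [0, -1]]
    else mat_of_rows_list 2 [[1, 0], [0, 1]])"

(* n-qubit Pauli strings (canonical representatives of Q_n, Paulis modulo phase) *)
definition pauli_strings :: "nat \<Rightarrow> (nat \<Rightarrow> nat) set" where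
  "pauli_strings n = {p. (\<forall>i<n. p i < 4) \<and> (\<forall>i\<ge>n. p i = 0)}"

definition pauli_star :: "nat \<Rightarrow> (nat \<Rightarrow> nat) set" where
  "pauli_star n = pauli_strings n - {(\<lambda>_. 0)}"

(* the operator P_1 \<otimes> ... \<otimes> P_n *)
definition pauli_mat :: "nat \<Rightarrow> (nat \<Rightarrow> nat) \<Rightarrow> complex mat" where
  "pauli_mat n p = mat (2 ^ n) (2 ^ n)
     (\<lambda>(r, c). \<Prod>i<n. pauli1 (p i) $$ (qbit i r, qbit i c))"

(* Z_a for a bit string a encoded as a number a < 2^n *)
definition Z_op :: "nat \<Rightarrow> nat \<Rightarrow> complex mat" where
  "Z_op n a = pauli_mat n (\<lambda>i. if i < n \<and> qbit i a = 1 then 3 else 0)"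

definition adj :: "complex mat \<Rightarrow> complex mat" where
  "adj A = mat_adjoint A"

definition unitary_mat :: "nat \<Rightarrow> complex mat \<Rightarrow> bool" where
  "unitary_mat d U \<longleftrightarrow> U \<in> carrier_mat d d \<and> adj U * U = 1\<^sub>m d \<and> U * adj U = 1\<^sub>m d"

definition mtrace :: "complex mat \<Rightarrow> complex" where
  "mtrace A = (\<Sum>i<dim_row A. A $$ (i, i))"

definition msum :: "nat \<Rightarrow> 'i set \<Rightarrow> ('i \<Rightarrow> complex mat) \<Rightarrow> complex mat" where
  "msum d F f = mat d d (\<lambda>(i, j). \<Sum>x\<in>F. f x $$ (i, j))"

definition ket_proj :: "nat \<Rightarrow> nat \<Rightarrow> complex mat" where
  "ket_proj d k = mat d d (\<lambda>(i, j). if i = k \<and> j = k then 1 else 0)"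

definition density_mat :: "nat \<Rightarrow> complex mat \<Rightarrow> bool" where
  "density_mat d \<sigma> \<longleftrightarrow> \<sigma> \<in> carrier_mat d d \<and> mtrace \<sigma> = 1 \<and>
     (\<forall>v \<in> carrier_vec d. Im (conjugate v \<bullet> (\<sigma> *\<^sub>v v)) = 0 \<and> Re (conjugate v \<bullet> (\<sigma> *\<^sub>v v)) \<ge> 0)"

definition mp_state :: "nat \<Rightarrow> nat \<Rightarrow> complex mat" where
  "mp_state n k = msum (2 ^ n) {..<2 ^ n}
     (\<lambda>l. complex_of_real ((1 - (if k = l then 1 else 0)) / (2 ^ n - 1)) \<cdot>\<^sub>m ket_proj (2 ^ n) l)"

definition M_chan :: "nat \<Rightarrow> complex mat \<Rightarrow> complex mat" where
  "M_chan n \<rho> = msum (2 ^ n) {..<2 ^ n}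
     (\<lambda>k. mtrace (ket_proj (2 ^ n) k * \<rho>) \<cdot>\<^sub>m mp_state n k)"

definition D0 :: "nat \<Rightarrow> complex mat \<Rightarrow> complex mat" where
  "D0 n \<rho> = complex_of_real (1 / (2 ^ (2 * n) - 1)) \<cdot>\<^sub>m
     msum (2 ^ n) (pauli_star n) (\<lambda>P. pauli_mat n P * \<rho> * pauli_mat n P)"

definition channel_twirl :: "nat \<Rightarrow> 'i set \<Rightarrow> ('i \<Rightarrow> real) \<Rightarrow> ('i \<Rightarrow> complex mat)
    \<Rightarrow> (complex mat \<Rightarrow> complex mat) \<Rightarrow> complex mat \<Rightarrow> complex mat" where
  "channel_twirl d I p U C \<rho> = msum d I
     (\<lambda>i. complex_of_real (p i) \<cdot>\<^sub>m (adj (U i) * C (U i * \<rho> * adj (U i)) * U i))"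

(* general ancilla-free measure-and-prepare circuit: apply U^\<dagger>, measure in the
   computational basis (i.e. measure in the basis {U|k>}), on outcome k prepare sigma k *)
definition mp_circuit :: "nat \<Rightarrow> complex mat \<Rightarrow> (nat \<Rightarrow> complex mat) \<Rightarrow> complex mat \<Rightarrow> complex mat" where
  "mp_circuit n U \<sigma> \<rho> = msum (2 ^ n) {..<2 ^ n}
     (\<lambda>k. mtrace (ket_proj (2 ^ n) k * (adj U * \<rho> * U)) \<cdot>\<^sub>m \<sigma> k)"

end

theory Submission
  imports Defs
begin

(* Write d = 2^n. Summing P rho P over all d^2 Pauli strings gives d tr(rho) I, while summing
   Z_a sigma Z_a over the d diagonal Pauli strings gives d times the diagonal part of sigma.
   Hence M(sigma) = (tr(sigma) I - diag(sigma)) / (d - 1), and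
   V_j diag(V_j^dagger rho V_j) V_j^dagger = (rho + sum_{P in S_j} P rho P) / d, the signs
   s_{j,a} squaring away. Averaging over the d + 1 classes S_j, which partition Q_n^*, yields
   (d tr(rho) I - rho) / (d^2 - 1) = D_0(rho).

   For minimality, let m <= d circuits with measurement bases U_i realise D_0. The conditions
   tr(rho) = 0 and <k| U_i^dagger rho U_i |k> = 0, of which at most 1 + m (d - 1) < d^2 are
   independent, have a common nonzero solution rho. Every circuit sends this rho to 0, whereas
   D_0(rho) = -rho / (d^2 - 1). *)

section \<open>Bit strings and Pauli strings\<close>

lemma qbit_less_2 [simp]: "qbit i r < 2"
  by (simp add: qbit_def)

lemma qbit_0_right [simp]: "qbit i 0 = 0"
  by (simp add: qbit_def)

lemma qbit_0: "qbit 0 r = r mod 2"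
  by (simp add: qbit_def)

lemma qbit_Suc: "qbit (Suc i) r = qbit i (r div 2)"
  by (simp add: qbit_def div_mult2_eq)

lemma qbit_power_2: "qbit j (2 ^ i) = (if j = i then 1 else 0)"
proof -
  have "qbit j (2 ^ i) = (if bit ((2::nat) ^ i) j then 1 else 0)"
    by (simp add: qbit_def bit_iff_odd odd_iff_mod_2_eq_one)
  then show ?thesis
    by (simp add: bit_exp_iff)
qed

lemma qbits_eq_iff:
  assumes "r < 2 ^ n" "c < 2 ^ n"
  shows "(\<forall>i<n. qbit i r = qbit i c) \<longleftrightarrow> r = c"
  using assms
proof (induction n arbitrary: r c)
  case (Suc n)
  have "r div 2 < 2 ^ n" "c div 2 < 2 ^ n"
    using Suc.prems by auto
  note IH = Suc.IH[OF this]
  have "(\<forall>i<Suc n. qbit i r = qbit i c) \<longleftrightarrow>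
      r mod 2 = c mod 2 \<and> (\<forall>i<n. qbit i (r div 2) = qbit i (c div 2))"
    by (auto simp: qbit_0 qbit_Suc less_Suc_eq_0_disj)
  also have "\<dots> \<longleftrightarrow> r = c"
    using IH by (metis div_mult_mod_eq)
  finally show ?case .
qed simp

lemma prod_lessThan_if_0:
  "(\<Prod>i<n. if P i then x else 0) = (if \<forall>i<n. P i then x ^ n else (0 :: 'a :: comm_semiring_1))"
  by (induction n) (auto simp: less_Suc_eq mult.commute)

lemma sum_lessThan_double:
  "(\<Sum>a<2 * m. f a) = (\<Sum>b<m. f (2 * b) + f (2 * b + 1))" for f :: "nat \<Rightarrow> 'a :: comm_monoid_add"
  by (induction m) (auto simp: ac_simps)

lemma sum_prod_qbits:
  "(\<Sum>a<2 ^ n. \<Prod>i<n. h i (qbit i a)) = (\<Prod>i<n. h i 0 + h i 1)"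
  for h :: "nat \<Rightarrow> nat \<Rightarrow> 'a :: comm_semiring_1"
proof (induction n arbitrary: h)
  case (Suc n)
  have "(\<Sum>a<2 ^ Suc n. \<Prod>i<Suc n. h i (qbit i a))
      = (\<Sum>a<2 * 2 ^ n. h 0 (a mod 2) * (\<Prod>i<n. h (Suc i) (qbit i (a div 2))))"
    by (simp del: prod.lessThan_Suc add: prod.lessThan_Suc_shift qbit_0 qbit_Suc)
  also have "\<dots> = (h 0 0 + h 0 1) * (\<Sum>b<2 ^ n. \<Prod>i<n. h (Suc i) (qbit i b))"
    by (simp add: sum_lessThan_double distrib_right sum_distrib_left)
  also have "\<dots> = (\<Prod>i<Suc n. h i 0 + h i 1)"
    using Suc.IH[of "\<lambda>i. h (Suc i)"] by (simp del: prod.lessThan_Suc add: prod.lessThan_Suc_shift)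
  finally show ?case .
qed simp

lemma finite_pauli_strings: "finite (pauli_strings n)"
proof -
  have "pauli_strings n = {f. \<forall>x. (x \<in> {..<n} \<longrightarrow> f x \<in> {..<4}) \<and> (x \<notin> {..<n} \<longrightarrow> f x = 0)}"
    unfolding pauli_strings_def by (simp add: not_less all_conj_distrib)
  then show ?thesis
    by (simp only: finite_set_of_finite_funs finite_lessThan)
qed

lemma zero_in_pauli_strings: "(\<lambda>_. 0) \<in> pauli_strings n"
  by (simp add: pauli_strings_def)

lemma finite_pauli_star: "finite (pauli_star n)"
  by (simp add: pauli_star_def finite_pauli_strings)

lemma pauli_strings_Suc:
  "pauli_strings (Suc n) = (\<lambda>(p, k). p(n := k)) ` (pauli_strings n \<times> {..<4})"
proof (intro equalityI subsetI)
  fix q assume "q \<in> pauli_strings (Suc n)"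
  then have "(q(n := 0), q n) \<in> pauli_strings n \<times> {..<4}"
    unfolding pauli_strings_def by (simp add: less_Suc_eq)
  moreover have "q = (\<lambda>(p, k). p(n := k)) (q(n := 0), q n)"
    by simp
  ultimately show "q \<in> (\<lambda>(p, k). p(n := k)) ` (pauli_strings n \<times> {..<4})"
    by blast
next
  fix q assume "q \<in> (\<lambda>(p, k). p(n := k)) ` (pauli_strings n \<times> {..<4})"
  then obtain p k where "p \<in> pauli_strings n" "k < 4" "q = p(n := k)"
    by auto
  then show "q \<in> pauli_strings (Suc n)"
    by (simp add: pauli_strings_def less_Suc_eq)
qed

lemma sum_prod_pauli_strings:
  "(\<Sum>p\<in>pauli_strings n. \<Prod>i<n. g i (p i)) = (\<Prod>i<n. \<Sum>k<4. g i k)"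
  for g :: "nat \<Rightarrow> nat \<Rightarrow> 'a :: comm_semiring_1"
proof (induction n)
  case 0
  have "pauli_strings 0 = {\<lambda>_. 0}"
    unfolding pauli_strings_def by auto
  then show ?case by simp
next
  case (Suc n)
  have inj: "inj_on (\<lambda>(p, k). p(n := k)) (pauli_strings n \<times> {..<4})"
  proof (rule inj_onI, clarsimp)
    fix p k p' k'
    assume "p \<in> pauli_strings n" "p' \<in> pauli_strings n" and upd: "p(n := k) = p'(n := k')"
    then have "p n = p' n"
      by (simp add: pauli_strings_def)
    with upd show "p = p' \<and> k = k'"
      by (metis fun_upd_idem_iff fun_upd_upd fun_upd_same)
  qed
  have "(\<Sum>p\<in>pauli_strings (Suc n). \<Prod>i<Suc n. g i (p i))
      = (\<Sum>(p, k)\<in>pauli_strings n \<times> {..<4}. \<Prod>i<Suc n. g i ((p(n := k)) i))"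
    unfolding pauli_strings_Suc by (subst sum.reindex[OF inj]) (simp add: case_prod_unfold)
  also have "\<dots> = (\<Sum>(p, k)\<in>pauli_strings n \<times> {..<4}. (\<Prod>i<n. g i (p i)) * g n k)"
    by (intro sum.cong refl) (auto simp: prod.lessThan_Suc)
  also have "\<dots> = (\<Sum>p\<in>pauli_strings n. \<Prod>i<n. g i (p i)) * (\<Sum>k<4. g n k)"
    by (simp add: sum.cartesian_product[symmetric] sum_product)
  finally show ?case
    by (simp add: Suc.IH)
qed

section \<open>Single-qubit Pauli matrices\<close>

lemma pauli1_0_index: "a < 2 \<Longrightarrow> b < 2 \<Longrightarrow> pauli1 0 $$ (a, b) = (if a = b then 1 else 0)"
  by (auto simp: pauli1_def less_2_cases_iff mat_of_rows_list_def)

lemma pauli1_3_index: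
  "a < 2 \<Longrightarrow> b < 2 \<Longrightarrow> pauli1 3 $$ (a, b) = (if a = b then (if a = 0 then 1 else -1) else 0)"
  by (auto simp: pauli1_def less_2_cases_iff mat_of_rows_list_def)

lemma pauli1_completeness:
  assumes "a < 2" "b < 2" "e < 2" "f < 2"
  shows "(\<Sum>k<4. pauli1 k $$ (a, b) * pauli1 k $$ (e, f)) = (if a = f \<and> b = e then 2 else 0)"
proof -
  from assms have "a \<in> {0, 1}" "b \<in> {0, 1}" "e \<in> {0, 1}" "f \<in> {0, 1}"
    by auto
  then show ?thesis
    unfolding pauli1_def by (auto simp: numeral_eq_Suc lessThan_Suc mat_of_rows_list_def)
qed

lemma pauli1_IZ_completeness:
  assumes "a < 2" "b < 2" "e < 2" "f < 2"
  shows "pauli1 0 $$ (a, b) * pauli1 0 $$ (e, f) + pauli1 3 $$ (a, b) * pauli1 3 $$ (e, f)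
    = (if a = b \<and> e = f \<and> a = f then 2 else 0)"
  using assms by (auto simp: pauli1_def less_2_cases_iff mat_of_rows_list_def)

section \<open>Entrywise matrix calculus\<close>

lemma adj_carrier [simp]: "A \<in> carrier_mat d d \<Longrightarrow> adj A \<in> carrier_mat d d"
  by (auto simp: adj_def mat_adjoint_def)

lemma adj_dim [simp]: "dim_row (adj A) = dim_col A" "dim_col (adj A) = dim_row A"
  by (auto simp: adj_def mat_adjoint_def)

lemma adj_index: "i < dim_col A \<Longrightarrow> j < dim_row A \<Longrightarrow> adj A $$ (i, j) = cnj (A $$ (j, i))"
  by (auto simp: adj_def mat_adjoint_def mat_of_rows_def)

lemma adj_adj [simp]: "adj (adj A) = A"
  by (rule eq_matI) (auto simp: adj_index)

lemma msum_carrier [simp]: "msum d F f \<in> carrier_mat d d"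
  by (simp add: msum_def)

lemma msum_dim [simp]: "dim_row (msum d F f) = d" "dim_col (msum d F f) = d"
  by (simp_all add: msum_def)

lemma msum_index: "i < d \<Longrightarrow> j < d \<Longrightarrow> msum d F f $$ (i, j) = (\<Sum>x\<in>F. f x $$ (i, j))"
  by (simp add: msum_def)

lemma mtrace_carrier: "A \<in> carrier_mat d d \<Longrightarrow> mtrace A = (\<Sum>i<d. A $$ (i, i))"
  by (simp add: mtrace_def)

lemma ket_proj_carrier [simp]: "ket_proj d k \<in> carrier_mat d d"
  by (simp add: ket_proj_def)

lemma mult_index_sum:
  "A \<in> carrier_mat d d \<Longrightarrow> B \<in> carrier_mat d d \<Longrightarrow> r < d \<Longrightarrow> c < d \<Longrightarrow>
    (A * B) $$ (r, c) = (\<Sum>s<d. A $$ (r, s) * B $$ (s, c))"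
  by (simp add: scalar_prod_def atLeast0LessThan)

lemma mult3_index_sum:
  assumes "A \<in> carrier_mat d d" "B \<in> carrier_mat d d" "C \<in> carrier_mat d d" "r < d" "c < d"
  shows "(A * B * C) $$ (r, c) = (\<Sum>s<d. \<Sum>t<d. A $$ (r, s) * B $$ (s, t) * C $$ (t, c))"
proof -
  have "(A * B * C) $$ (r, c) = (\<Sum>t<d. (A * B) $$ (r, t) * C $$ (t, c))"
    using assms by (intro mult_index_sum) auto
  also have "\<dots> = (\<Sum>t<d. (\<Sum>s<d. A $$ (r, s) * B $$ (s, t)) * C $$ (t, c))"
    using assms by (intro sum.cong refl) (simp del: index_mult_mat add: mult_index_sum)
  also have "\<dots> = (\<Sum>s<d. \<Sum>t<d. A $$ (r, s) * B $$ (s, t) * C $$ (t, c))"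
    by (simp add: sum_distrib_right) (rule sum.swap)
  finally show ?thesis .
qed

lemma mtrace_ket_proj_mult:
  assumes "X \<in> carrier_mat d d" "k < d"
  shows "mtrace (ket_proj d k * X) = X $$ (k, k)"
proof -
  have "ket_proj d k * X \<in> carrier_mat d d"
    using assms(1) by (metis ket_proj_carrier mult_carrier_mat)
  then have "mtrace (ket_proj d k * X) = (\<Sum>i<d. (ket_proj d k * X) $$ (i, i))"
    by (rule mtrace_carrier)
  also have "\<dots> = (\<Sum>i<d. \<Sum>s<d. ket_proj d k $$ (i, s) * X $$ (s, i))"
    using assms by (intro sum.cong refl) (simp del: index_mult_mat add: mult_index_sum)
  also have "\<dots> = (\<Sum>i<d. if i = k then X $$ (k, k) else 0)"
    using assms(2) by (intro sum.cong refl) (auto simp: ket_proj_def if_distrib[of "\<lambda>a. a * _"] cong: if_cong)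
  finally show ?thesis
    using assms by simp
qed

lemma sum_sandwich_index:
  fixes W :: "'i \<Rightarrow> 'a :: comm_semiring_0 mat"
  assumes "\<And>x. x \<in> F \<Longrightarrow> W x \<in> carrier_mat d d" "B \<in> carrier_mat d d" "r < d" "c < d"
  shows "(\<Sum>x\<in>F. (W x * B * W x) $$ (r, c))
    = (\<Sum>s<d. \<Sum>t<d. B $$ (s, t) * (\<Sum>x\<in>F. W x $$ (r, s) * W x $$ (t, c)))"
proof -
  have reorder: "W x $$ (r, s) * B $$ (s, t) * W x $$ (t, c) = B $$ (s, t) * (W x $$ (r, s) * W x $$ (t, c))"
    for x s t
    by (simp add: ac_simps)
  have "(\<Sum>x\<in>F. (W x * B * W x) $$ (r, c))
      = (\<Sum>x\<in>F. \<Sum>s<d. \<Sum>t<d. B $$ (s, t) * (W x $$ (r, s) * W x $$ (t, c)))"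
    using assms by (intro sum.cong refl) (simp del: index_mult_mat add: mult3_index_sum[of _ d] reorder)
  also have "\<dots> = (\<Sum>s<d. \<Sum>t<d. \<Sum>x\<in>F. B $$ (s, t) * (W x $$ (r, s) * W x $$ (t, c)))"
    by (subst sum.swap, rule sum.cong[OF refl], rule sum.swap)
  finally show ?thesis
    by (simp add: sum_distrib_left)
qed

lemma unitary_carrier: "unitary_mat d V \<Longrightarrow> V \<in> carrier_mat d d"
  by (simp add: unitary_mat_def)

lemma conj_index:
  assumes "V \<in> carrier_mat d d" "X \<in> carrier_mat d d" "r < d" "c < d"
  shows "(V * X * adj V) $$ (r, c) = (\<Sum>s<d. \<Sum>t<d. V $$ (r, s) * X $$ (s, t) * cnj (V $$ (c, t)))"
  using assms by (simp del: index_mult_mat add: mult3_index_sum[of _ d] adj_index)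

lemma sum_conj_index:
  assumes V: "V \<in> carrier_mat d d" and X: "\<And>x. x \<in> F \<Longrightarrow> X x \<in> carrier_mat d d"
    and "r < d" "c < d"
  shows "(\<Sum>x\<in>F. (V * X x * adj V) $$ (r, c)) = (V * msum d F X * adj V) $$ (r, c)"
proof -
  have "(\<Sum>x\<in>F. (V * X x * adj V) $$ (r, c))
      = (\<Sum>x\<in>F. \<Sum>s<d. \<Sum>t<d. V $$ (r, s) * X x $$ (s, t) * cnj (V $$ (c, t)))"
    using assms by (intro sum.cong refl) (simp del: index_mult_mat add: conj_index)
  also have "\<dots> = (\<Sum>s<d. \<Sum>t<d. \<Sum>x\<in>F. V $$ (r, s) * X x $$ (s, t) * cnj (V $$ (c, t)))"
    by (subst sum.swap, rule sum.cong[OF refl], rule sum.swap)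
  also have "\<dots> = (\<Sum>s<d. \<Sum>t<d. V $$ (r, s) * msum d F X $$ (s, t) * cnj (V $$ (c, t)))"
    by (intro sum.cong refl) (simp add: msum_index sum_distrib_left sum_distrib_right)
  also have "\<dots> = (V * msum d F X * adj V) $$ (r, c)"
    using assms by (simp del: index_mult_mat add: conj_index)
  finally show ?thesis .
qed

lemma unitary_rows_orthonormal:
  assumes "unitary_mat d V" "r < d" "c < d"
  shows "(\<Sum>s<d. V $$ (r, s) * cnj (V $$ (c, s))) = (if r = c then 1 else 0)"
proof -
  have V: "V \<in> carrier_mat d d"
    using assms(1) by (rule unitary_carrier)
  have "(V * adj V) $$ (r, c) = (if r = c then 1 else 0)"
    using assms unfolding unitary_mat_def by simp
  then show ?thesis
    using assms V by (simp del: index_mult_mat add: mult_index_sum[of _ d] adj_index)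
qed

lemma conj_diagonal_index:
  assumes "unitary_mat d V" "X \<in> carrier_mat d d" "r < d" "c < d"
    and diag: "\<And>s t. s < d \<Longrightarrow> t < d \<Longrightarrow> X $$ (s, t) = (if s = t then w s else 0)"
  shows "(V * X * adj V) $$ (r, c) = (\<Sum>s<d. V $$ (r, s) * w s * cnj (V $$ (c, s)))"
proof -
  have "(V * X * adj V) $$ (r, c) = (\<Sum>s<d. \<Sum>t<d. V $$ (r, s) * X $$ (s, t) * cnj (V $$ (c, t)))"
    using assms(1-4) by (simp add: conj_index unitary_carrier)
  also have "\<dots> = (\<Sum>s<d. \<Sum>t<d. if t = s then V $$ (r, s) * w s * cnj (V $$ (c, s)) else 0)"
    by (intro sum.cong refl) (auto simp: diag)
  finally show ?thesis
    by simp
qed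

lemma mtrace_unitary_conj:
  assumes "unitary_mat d V" "\<rho> \<in> carrier_mat d d"
  shows "mtrace (adj V * \<rho> * V) = mtrace \<rho>"
proof -
  have V: "V \<in> carrier_mat d d"
    using assms(1) by (rule unitary_carrier)
  have "adj V * \<rho> * V \<in> carrier_mat d d"
    using assms V by auto
  then have "mtrace (adj V * \<rho> * V) = (\<Sum>k<d. \<Sum>s<d. \<Sum>t<d. cnj (V $$ (s, k)) * \<rho> $$ (s, t) * V $$ (t, k))"
    using assms V by (simp del: index_mult_mat add: mtrace_carrier[of _ d] mult3_index_sum[of _ d] adj_index)
  also have "\<dots> = (\<Sum>s<d. \<Sum>t<d. \<Sum>k<d. \<rho> $$ (s, t) * (V $$ (t, k) * cnj (V $$ (s, k))))"
    by (subst sum.swap, rule sum.cong[OF refl], subst sum.swap) (simp add: ac_simps)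
  also have "\<dots> = (\<Sum>s<d. \<Sum>t<d. \<rho> $$ (s, t) * (\<Sum>k<d. V $$ (t, k) * cnj (V $$ (s, k))))"
    by (simp add: sum_distrib_left)
  also have "\<dots> = mtrace \<rho>"
    using assms by (simp add: unitary_rows_orthonormal mtrace_carrier[of _ d] if_distrib cong: if_cong)
  finally show ?thesis .
qed

lemma unitary_conj_cancel:
  assumes "unitary_mat d V" "Z \<in> carrier_mat d d"
  shows "adj V * (V * Z * adj V) * V = Z"
proof -
  have V: "V \<in> carrier_mat d d"
    using assms(1) by (rule unitary_carrier)
  then have "adj V * (V * Z * adj V) * V = (adj V * V) * Z * (adj V * V)"
    using assms(2) by (simp add: assoc_mult_mat[of _ d d _ d _ d] mult_carrier_mat[of _ d d _ d])
  then show ?thesis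
    using assms unfolding unitary_mat_def by simp
qed

lemma smult_sandwich:
  fixes W :: "'a :: comm_ring mat"
  assumes "W \<in> carrier_mat d d" "B \<in> carrier_mat d d"
  shows "(k \<cdot>\<^sub>m W) * B * (k \<cdot>\<^sub>m W) = (k * k) \<cdot>\<^sub>m (W * B * W)"
proof -
  have "(k \<cdot>\<^sub>m W) * B * (k \<cdot>\<^sub>m W) = k \<cdot>\<^sub>m (W * B) * (k \<cdot>\<^sub>m W)"
    using assms by (simp add: mult_smult_assoc_mat)
  also have "\<dots> = k \<cdot>\<^sub>m (W * B * (k \<cdot>\<^sub>m W))"
    using assms by (intro mult_smult_assoc_mat) auto
  also have "\<dots> = k \<cdot>\<^sub>m (k \<cdot>\<^sub>m (W * B * W))"
    using assms by (subst mult_smult_distrib) auto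
  also have "\<dots> = (k * k) \<cdot>\<^sub>m (W * B * W)"
    by (rule eq_matI) (simp_all add: mult.assoc)
  finally show ?thesis .
qed

lemma smult_conj:
  assumes "V \<in> carrier_mat d d" "Z \<in> carrier_mat d d"
  shows "k \<cdot>\<^sub>m (V * Z * adj V) = V * (k \<cdot>\<^sub>m Z) * adj V"
proof -
  have "V * (k \<cdot>\<^sub>m Z) = k \<cdot>\<^sub>m (V * Z)"
    using assms by (rule mult_smult_distrib)
  moreover have "k \<cdot>\<^sub>m (V * Z) * adj V = k \<cdot>\<^sub>m (V * Z * adj V)"
    using assms by (intro mult_smult_assoc_mat) auto
  ultimately show ?thesis
    by simp
qed

lemma conj_sandwich_assoc:
  assumes "V \<in> carrier_mat d d" "Z \<in> carrier_mat d d" "\<rho> \<in> carrier_mat d d"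
  shows "(V * Z * adj V) * \<rho> * (V * Z * adj V) = V * (Z * (adj V * \<rho> * V) * Z) * adj V"
  using assms by (simp add: assoc_mult_mat[of _ d d _ d _ d] mult_carrier_mat[of _ d d _ d])

section \<open>Pauli and Z twirls\<close>

lemma pauli_mat_carrier [simp]: "pauli_mat n p \<in> carrier_mat (2 ^ n) (2 ^ n)"
  by (simp add: pauli_mat_def)

lemma pauli_mat_index:
  "r < 2 ^ n \<Longrightarrow> c < 2 ^ n \<Longrightarrow> pauli_mat n p $$ (r, c) = (\<Prod>i<n. pauli1 (p i) $$ (qbit i r, qbit i c))"
  by (simp add: pauli_mat_def)

lemma Z_op_carrier [simp]: "Z_op n a \<in> carrier_mat (2 ^ n) (2 ^ n)"
  by (simp add: Z_op_def)

lemma Z_op_index: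
  "r < 2 ^ n \<Longrightarrow> c < 2 ^ n \<Longrightarrow>
    Z_op n a $$ (r, c) = (\<Prod>i<n. pauli1 (if qbit i a = 1 then 3 else 0) $$ (qbit i r, qbit i c))"
  by (simp add: Z_op_def pauli_mat_index)

lemma pauli_mat_zero: "pauli_mat n (\<lambda>_. 0) = 1\<^sub>m (2 ^ n)"
proof (rule eq_matI)
  fix r c
  assume "r < dim_row (1\<^sub>m (2 ^ n) :: complex mat)" "c < dim_col (1\<^sub>m (2 ^ n) :: complex mat)"
  then have "r < 2 ^ n" "c < 2 ^ n"
    by simp_all
  then show "pauli_mat n (\<lambda>_. 0) $$ (r, c) = 1\<^sub>m (2 ^ n) $$ (r, c)"
    by (simp add: pauli_mat_index pauli1_0_index prod_lessThan_if_0 qbits_eq_iff)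
qed (simp_all add: pauli_mat_def)

lemma Z_op_dim [simp]: "dim_row (Z_op n a) = 2 ^ n" "dim_col (Z_op n a) = 2 ^ n"
  by (simp_all add: Z_op_def pauli_mat_def)

lemma Z_op_zero: "Z_op n 0 = 1\<^sub>m (2 ^ n)"
  by (simp add: Z_op_def pauli_mat_zero)

lemma pauli_mat_completeness:
  assumes "r < 2 ^ n" "c < 2 ^ n" "s < 2 ^ n" "t < 2 ^ n"
  shows "(\<Sum>P\<in>pauli_strings n. pauli_mat n P $$ (r, s) * pauli_mat n P $$ (t, c))
    = (if r = c \<and> s = t then 2 ^ n else 0)"
proof -
  have "(\<Sum>P\<in>pauli_strings n. pauli_mat n P $$ (r, s) * pauli_mat n P $$ (t, c))
     = (\<Sum>P\<in>pauli_strings n. \<Prod>i<n. pauli1 (P i) $$ (qbit i r, qbit i s) * pauli1 (P i) $$ (qbit i t, qbit i c))"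
    using assms by (simp add: pauli_mat_index prod.distrib)
  also have "\<dots> = (\<Prod>i<n. \<Sum>k<4. pauli1 k $$ (qbit i r, qbit i s) * pauli1 k $$ (qbit i t, qbit i c))"
    by (rule sum_prod_pauli_strings)
  also have "\<dots> = (\<Prod>i<n. if qbit i r = qbit i c \<and> qbit i s = qbit i t then 2 else 0)"
    by (simp add: pauli1_completeness)
  also have "\<dots> = (if r = c \<and> s = t then 2 ^ n else 0)"
    using assms by (simp add: prod_lessThan_if_0 qbits_eq_iff[symmetric] all_conj_distrib)
  finally show ?thesis .
qed

lemma Z_op_completeness:
  assumes "r < 2 ^ n" "c < 2 ^ n" "s < 2 ^ n" "t < 2 ^ n"
  shows "(\<Sum>a<2 ^ n. Z_op n a $$ (r, s) * Z_op n a $$ (t, c))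
    = (if r = s \<and> t = c \<and> r = c then 2 ^ n else 0)"
proof -
  define z where "z i (b :: nat) = pauli1 (if b = 1 then 3 else 0) $$ (qbit i r, qbit i s)
    * pauli1 (if b = 1 then 3 else 0) $$ (qbit i t, qbit i c)" for i b
  have "(\<Sum>a<2 ^ n. Z_op n a $$ (r, s) * Z_op n a $$ (t, c)) = (\<Sum>a<2 ^ n. \<Prod>i<n. z i (qbit i a))"
    using assms by (simp add: Z_op_index prod.distrib z_def)
  also have "\<dots> = (\<Prod>i<n. z i 0 + z i 1)"
    by (rule sum_prod_qbits)
  also have "\<dots> = (\<Prod>i<n. if qbit i r = qbit i s \<and> qbit i t = qbit i c \<and> qbit i r = qbit i c then 2 else 0)"
    by (simp add: z_def pauli1_IZ_completeness)
  also have "\<dots> = (if r = s \<and> t = c \<and> r = c then 2 ^ n else 0)"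
  proof -
    have "(\<forall>i<n. qbit i r = qbit i s \<and> qbit i t = qbit i c \<and> qbit i r = qbit i c)
        \<longleftrightarrow> (\<forall>i<n. qbit i r = qbit i s) \<and> (\<forall>i<n. qbit i t = qbit i c) \<and> (\<forall>i<n. qbit i r = qbit i c)"
      by blast
    then show ?thesis
      using assms by (simp only: prod_lessThan_if_0 qbits_eq_iff)
  qed
  finally show ?thesis .
qed

lemma pauli_twirl_index:
  assumes "\<rho> \<in> carrier_mat (2 ^ n) (2 ^ n)" "r < 2 ^ n" "c < 2 ^ n"
  shows "(\<Sum>P\<in>pauli_strings n. (pauli_mat n P * \<rho> * pauli_mat n P) $$ (r, c))
    = (if r = c then 2 ^ n * mtrace \<rho> else 0)"
proof -
  have "(\<Sum>P\<in>pauli_strings n. (pauli_mat n P * \<rho> * pauli_mat n P) $$ (r, c))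
      = (\<Sum>s<2 ^ n. \<Sum>t<2 ^ n. \<rho> $$ (s, t) * (if r = c \<and> s = t then 2 ^ n else 0))"
    using assms by (simp add: sum_sandwich_index[of _ _ "2 ^ n"] pauli_mat_completeness)
  also have "\<dots> = (\<Sum>s<2 ^ n. if r = c then 2 ^ n * \<rho> $$ (s, s) else 0)"
    by (intro sum.cong refl) (auto simp: if_distrib cong: if_cong)
  finally show ?thesis
    using assms by (simp add: mtrace_carrier sum_distrib_left)
qed

lemma pauli_star_twirl_index:
  assumes "\<rho> \<in> carrier_mat (2 ^ n) (2 ^ n)" "r < 2 ^ n" "c < 2 ^ n"
  shows "(\<Sum>P\<in>pauli_star n. (pauli_mat n P * \<rho> * pauli_mat n P) $$ (r, c))
    = (if r = c then 2 ^ n * mtrace \<rho> else 0) - \<rho> $$ (r, c)"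
proof -
  let ?f = "\<lambda>P. (pauli_mat n P * \<rho> * pauli_mat n P) $$ (r, c)"
  have "(\<Sum>P\<in>pauli_strings n. ?f P) = ?f (\<lambda>_. 0) + (\<Sum>P\<in>pauli_star n. ?f P)"
    unfolding pauli_star_def by (rule sum.remove[OF finite_pauli_strings zero_in_pauli_strings])
  moreover have "?f (\<lambda>_. 0) = \<rho> $$ (r, c)"
    using assms by (simp add: pauli_mat_zero)
  ultimately show ?thesis
    using pauli_twirl_index[OF assms] by simp
qed

lemma Z_twirl_index:
  assumes "\<sigma> \<in> carrier_mat (2 ^ n) (2 ^ n)" "r < 2 ^ n" "c < 2 ^ n"
  shows "(\<Sum>a<2 ^ n. (Z_op n a * \<sigma> * Z_op n a) $$ (r, c)) = (if r = c then 2 ^ n * \<sigma> $$ (r, r) else 0)"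
proof -
  have "(\<Sum>a<2 ^ n. (Z_op n a * \<sigma> * Z_op n a) $$ (r, c))
      = (\<Sum>s<2 ^ n. \<Sum>t<2 ^ n. \<sigma> $$ (s, t) * (if r = s \<and> t = c \<and> r = c then 2 ^ n else 0))"
    using assms by (simp del: index_mult_mat add: sum_sandwich_index[of _ _ "2 ^ n"] Z_op_completeness)
  also have "\<dots> = (if r = c then 2 ^ n * \<sigma> $$ (r, r) else 0)"
  proof (cases "r = c")
    case True
    have "(\<Sum>s<2 ^ n. \<Sum>t<2 ^ n. \<sigma> $$ (s, t) * (if r = s \<and> t = c \<and> r = c then 2 ^ n else 0))
        = (\<Sum>s<2 ^ n. if s = r then (\<Sum>t<2 ^ n. if t = r then 2 ^ n * \<sigma> $$ (r, r) else 0) else 0)"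
      using True by (intro sum.cong refl) (auto simp: if_distrib cong: if_cong)
    then show ?thesis
      using True assms by simp
  qed simp
  finally show ?thesis .
qed

lemma Z_op_index_0_0: "Z_op n a $$ (0, 0) = 1"
  by (simp add: Z_op_index pauli1_0_index pauli1_3_index)

lemma Z_op_index_power_2:
  assumes "i < n"
  shows "Z_op n a $$ (2 ^ i, 2 ^ i) = (if qbit i a = 1 then -1 else 1)"
proof -
  have "(2::nat) ^ i < 2 ^ n"
    using assms by simp
  then have "Z_op n a $$ (2 ^ i, 2 ^ i)
      = (\<Prod>j<n. pauli1 (if qbit j a = 1 then 3 else 0) $$ (qbit j (2 ^ i), qbit j (2 ^ i)))"
    by (simp add: Z_op_index)
  also have "\<dots> = (\<Prod>j<n. if j = i then (if qbit i a = 1 then -1 else 1) else 1)"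
  proof (rule prod.cong[OF refl])
    fix j
    show "pauli1 (if qbit j a = 1 then 3 else 0) $$ (qbit j (2 ^ i), qbit j (2 ^ i))
        = (if j = i then if qbit i a = 1 then -1 else 1 else 1)"
      by (cases "j = i"; cases "qbit j a = 1") (simp_all add: qbit_power_2 pauli1_0_index pauli1_3_index)
  qed
  finally show ?thesis
    using assms by simp
qed

lemma inj_on_Z_op: "inj_on (Z_op n) {..<2 ^ n}"
proof (rule inj_onI)
  fix a b
  assume ab: "a \<in> {..<2 ^ n}" "b \<in> {..<2 ^ n}" and eq: "Z_op n a = Z_op n b"
  have "qbit i a = qbit i b" if "i < n" for i
  proof -
    have "qbit i a = 1 \<longleftrightarrow> qbit i b = 1"
      using Z_op_index_power_2[OF that, of a] Z_op_index_power_2[OF that, of b] eq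
      by (auto split: if_splits)
    moreover have "qbit i a < 2" "qbit i b < 2"
      by simp_all
    ultimately show ?thesis
      by linarith
  qed
  then show "a = b"
    using ab qbits_eq_iff by blast
qed

lemma inj_on_signed_conj_Z_op:
  assumes V: "unitary_mat (2 ^ n) V" and sgn: "\<forall>a. s a = 1 \<or> s a = -1"
  shows "inj_on (\<lambda>a. s a \<cdot>\<^sub>m (V * Z_op n a * adj V)) {..<2 ^ n}"
proof (rule inj_onI)
  fix a b
  assume ab: "a \<in> {..<2 ^ n}" "b \<in> {..<2 ^ n}"
    and eq: "s a \<cdot>\<^sub>m (V * Z_op n a * adj V) = s b \<cdot>\<^sub>m (V * Z_op n b * adj V)"
  have Vc: "V \<in> carrier_mat (2 ^ n) (2 ^ n)"
    using V by (rule unitary_carrier)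
  have cancel: "adj V * (s x \<cdot>\<^sub>m (V * Z_op n x * adj V)) * V = s x \<cdot>\<^sub>m Z_op n x" for x
    unfolding smult_conj[OF Vc Z_op_carrier] by (rule unitary_conj_cancel[OF V]) simp
  have "s a \<cdot>\<^sub>m Z_op n a = s b \<cdot>\<^sub>m Z_op n b"
    using cancel[of a] cancel[of b] eq by simp
  then have entries: "s a * Z_op n a $$ (i, j) = s b * Z_op n b $$ (i, j)" if "i < 2 ^ n" "j < 2 ^ n" for i j
    using that by (metis Z_op_dim index_smult_mat(1))
  have "s a = s b"
    using entries[of 0 0] by (simp add: Z_op_index_0_0)
  moreover have "s a \<noteq> 0"
    using sgn by (metis neg_equal_0_iff_equal zero_neq_one)
  ultimately have "Z_op n a = Z_op n b"
    by (intro eq_matI) (auto dest: entries)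
  then show "a = b"
    using ab inj_on_Z_op by (blast dest: inj_onD)
qed

lemma stabilizer_twirl_index:
  assumes V: "unitary_mat (2 ^ n) V" and sgn: "\<forall>a. s a = 1 \<or> s a = -1"
    and S: "pauli_mat n ` S = {s a \<cdot>\<^sub>m (V * Z_op n a * adj V) | a. 0 < a \<and> a < 2 ^ n}"
    and S_finite: "finite S" and S_card: "card S = 2 ^ n - 1"
    and \<rho>: "\<rho> \<in> carrier_mat (2 ^ n) (2 ^ n)" and rc: "r < 2 ^ n" "c < 2 ^ n"
  shows "(\<Sum>a<2 ^ n. ((V * Z_op n a * adj V) * \<rho> * (V * Z_op n a * adj V)) $$ (r, c))
    = \<rho> $$ (r, c) + (\<Sum>P\<in>S. (pauli_mat n P * \<rho> * pauli_mat n P) $$ (r, c))"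
proof -
  define A where "A = {0<..<(2::nat) ^ n}"
  define g where "g a = s a \<cdot>\<^sub>m (V * Z_op n a * adj V)" for a
  define f where "f M = (M * \<rho> * M) $$ (r, c)" for M
  have Vc: "V \<in> carrier_mat (2 ^ n) (2 ^ n)"
    using V by (rule unitary_carrier)
  have g_inj: "inj_on g A"
    using inj_on_signed_conj_Z_op[OF V sgn] unfolding g_def A_def
    by (rule inj_on_subset) auto
  have gA: "g ` A = pauli_mat n ` S"
    unfolding S g_def A_def by auto
  have "card A = 2 ^ n - 1"
    unfolding A_def by simp
  then have "inj_on (pauli_mat n) S"
    using card_image[OF g_inj] S_card gA by (intro eq_card_imp_inj_on[OF S_finite]) simp
  then have "(\<Sum>P\<in>S. f (pauli_mat n P)) = (\<Sum>M\<in>g ` A. f M)"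
    unfolding gA by (simp add: sum.reindex)
  then have sum_S: "(\<Sum>P\<in>S. f (pauli_mat n P)) = (\<Sum>a\<in>A. f (g a))"
    by (simp add: sum.reindex[OF g_inj])
  have sign: "f (V * Z_op n a * adj V) = f (g a)" for a
  proof -
    have "V * Z_op n a * adj V \<in> carrier_mat (2 ^ n) (2 ^ n)"
      using Vc by auto
    from smult_sandwich[OF this \<rho>, of "s a"]
    have "g a * \<rho> * g a = (s a * s a) \<cdot>\<^sub>m (V * Z_op n a * adj V * \<rho> * (V * Z_op n a * adj V))"
      unfolding g_def .
    moreover have "s a * s a = 1"
      using sgn by (metis mult_1 mult_minus1 minus_minus)
    ultimately show ?thesis
      unfolding f_def using Vc rc by simp
  qed
  have "{..<2 ^ n} = insert 0 A"
    unfolding A_def by auto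
  then have "(\<Sum>a<2 ^ n. f (V * Z_op n a * adj V)) = f (V * Z_op n 0 * adj V) + (\<Sum>a\<in>A. f (g a))"
    unfolding A_def by (simp add: sign)
  also have "V * Z_op n 0 * adj V = 1\<^sub>m (2 ^ n)"
    using V Vc unfolding unitary_mat_def by (simp add: Z_op_zero)
  finally show ?thesis
    using \<rho> sum_S by (simp add: f_def)
qed

lemma conj_Z_twirl_index:
  assumes V: "unitary_mat (2 ^ n) V" and \<rho>: "\<rho> \<in> carrier_mat (2 ^ n) (2 ^ n)"
    and rc: "r < 2 ^ n" "c < 2 ^ n"
  shows "(\<Sum>a<2 ^ n. ((V * Z_op n a * adj V) * \<rho> * (V * Z_op n a * adj V)) $$ (r, c))
    = 2 ^ n * (\<Sum>s<2 ^ n. V $$ (r, s) * (adj V * \<rho> * V) $$ (s, s) * cnj (V $$ (c, s)))"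
proof -
  define \<sigma> where "\<sigma> = adj V * \<rho> * V"
  have Vc: "V \<in> carrier_mat (2 ^ n) (2 ^ n)"
    using V by (rule unitary_carrier)
  have \<sigma>c: "\<sigma> \<in> carrier_mat (2 ^ n) (2 ^ n)"
    unfolding \<sigma>_def using Vc \<rho> by auto
  have "(\<Sum>a<2 ^ n. ((V * Z_op n a * adj V) * \<rho> * (V * Z_op n a * adj V)) $$ (r, c))
      = (\<Sum>a<2 ^ n. (V * (Z_op n a * \<sigma> * Z_op n a) * adj V) $$ (r, c))"
    unfolding \<sigma>_def using Vc \<rho> by (simp add: conj_sandwich_assoc)
  also have "\<dots> = (V * msum (2 ^ n) {..<2 ^ n} (\<lambda>a. Z_op n a * \<sigma> * Z_op n a) * adj V) $$ (r, c)"
    using Vc \<sigma>c rc by (intro sum_conj_index) auto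
  also have "\<dots> = (\<Sum>s<2 ^ n. V $$ (r, s) * (2 ^ n * \<sigma> $$ (s, s)) * cnj (V $$ (c, s)))"
    using V \<sigma>c rc by (intro conj_diagonal_index) (simp_all del: index_mult_mat add: msum_index Z_twirl_index)
  finally show ?thesis
    unfolding \<sigma>_def by (simp add: sum_distrib_left ac_simps)
qed

section \<open>The twirled measure-and-prepare channel\<close>

lemma D0_index:
  assumes "\<rho> \<in> carrier_mat (2 ^ n) (2 ^ n)" "r < 2 ^ n" "c < 2 ^ n"
  shows "D0 n \<rho> $$ (r, c)
    = complex_of_real (1 / (2 ^ (2 * n) - 1)) * ((if r = c then 2 ^ n * mtrace \<rho> else 0) - \<rho> $$ (r, c))"
  using assms by (simp add: D0_def msum_index pauli_star_twirl_index)

lemma M_chan_carrier [simp]: "M_chan n \<sigma> \<in> carrier_mat (2 ^ n) (2 ^ n)"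
  by (simp add: M_chan_def)

lemma mp_state_dim [simp]: "dim_row (mp_state n k) = 2 ^ n" "dim_col (mp_state n k) = 2 ^ n"
  by (simp_all add: mp_state_def)

lemma mp_state_index:
  assumes "r < 2 ^ n" "c < 2 ^ n"
  shows "mp_state n k $$ (r, c) = (if r = c \<and> k \<noteq> r then 1 / (2 ^ n - 1) else 0)"
proof -
  have "mp_state n k $$ (r, c) = (\<Sum>l<2 ^ n.
      (complex_of_real ((1 - (if k = l then 1 else 0)) / (2 ^ n - 1)) \<cdot>\<^sub>m ket_proj (2 ^ n) l) $$ (r, c))"
    unfolding mp_state_def using assms by (rule msum_index)
  also have "\<dots> = (\<Sum>l<2 ^ n. if l = r then (if r = c \<and> k \<noteq> r then 1 / (2 ^ n - 1) else 0) else 0)"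
    using assms by (intro sum.cong refl) (auto simp: ket_proj_def)
  finally show ?thesis
    using assms by simp
qed

lemma M_chan_index:
  assumes "\<sigma> \<in> carrier_mat (2 ^ n) (2 ^ n)" "r < 2 ^ n" "c < 2 ^ n"
  shows "M_chan n \<sigma> $$ (r, c) = (if r = c then (mtrace \<sigma> - \<sigma> $$ (r, r)) / (2 ^ n - 1) else 0)"
proof -
  have "M_chan n \<sigma> $$ (r, c) = (\<Sum>k<2 ^ n. \<sigma> $$ (k, k) * mp_state n k $$ (r, c))"
    unfolding M_chan_def using assms by (simp add: msum_index mtrace_ket_proj_mult)
  also have "\<dots> = (if r = c then (\<Sum>k<2 ^ n. \<sigma> $$ (k, k) / (2 ^ n - 1) - (if k = r then \<sigma> $$ (r, r) / (2 ^ n - 1) else 0)) else 0)"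
    using assms by (auto simp: mp_state_index intro!: sum.cong)
  also have "\<dots> = (if r = c then (mtrace \<sigma> - \<sigma> $$ (r, r)) / (2 ^ n - 1) else 0)"
    using assms by (simp add: sum_subtractf mtrace_carrier sum_divide_distrib diff_divide_distrib)
  finally show ?thesis .
qed

lemma conj_M_chan_index:
  assumes V: "unitary_mat (2 ^ n) V" and \<rho>: "\<rho> \<in> carrier_mat (2 ^ n) (2 ^ n)"
    and rc: "r < 2 ^ n" "c < 2 ^ n"
  shows "(V * M_chan n (adj V * \<rho> * V) * adj V) $$ (r, c)
    = ((if r = c then mtrace \<rho> else 0)
       - (\<Sum>a<2 ^ n. ((V * Z_op n a * adj V) * \<rho> * (V * Z_op n a * adj V)) $$ (r, c)) / 2 ^ n) / (2 ^ n - 1)"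
proof -
  define \<sigma> where "\<sigma> = adj V * \<rho> * V"
  define w where "w = (\<Sum>s<2 ^ n. V $$ (r, s) * \<sigma> $$ (s, s) * cnj (V $$ (c, s)))"
  have \<sigma>c: "\<sigma> \<in> carrier_mat (2 ^ n) (2 ^ n)"
    unfolding \<sigma>_def using unitary_carrier[OF V] \<rho> by auto
  have summand: "V $$ (r, s) * ((mtrace \<sigma> - \<sigma> $$ (s, s)) / (2 ^ n - 1)) * cnj (V $$ (c, s))
      = (mtrace \<sigma> * (V $$ (r, s) * cnj (V $$ (c, s))) - V $$ (r, s) * \<sigma> $$ (s, s) * cnj (V $$ (c, s)))
        / (2 ^ n - 1)" for s
    by (simp add: diff_divide_distrib algebra_simps)
  have "(V * M_chan n \<sigma> * adj V) $$ (r, c)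
      = (\<Sum>s<2 ^ n. V $$ (r, s) * ((mtrace \<sigma> - \<sigma> $$ (s, s)) / (2 ^ n - 1)) * cnj (V $$ (c, s)))"
    using V \<sigma>c rc by (intro conj_diagonal_index) (simp_all add: M_chan_index)
  also have "\<dots> = (mtrace \<sigma> * (\<Sum>s<2 ^ n. V $$ (r, s) * cnj (V $$ (c, s))) - w) / (2 ^ n - 1)"
    unfolding summand w_def sum_divide_distrib[symmetric] sum_subtractf sum_distrib_left ..
  also have "(\<Sum>s<2 ^ n. V $$ (r, s) * cnj (V $$ (c, s))) = (if r = c then 1 else 0)"
    using V rc by (rule unitary_rows_orthonormal)
  also have "mtrace \<sigma> = mtrace \<rho>"
    unfolding \<sigma>_def using V \<rho> by (rule mtrace_unitary_conj)
  also have "w = (\<Sum>a<2 ^ n. ((V * Z_op n a * adj V) * \<rho> * (V * Z_op n a * adj V)) $$ (r, c)) / 2 ^ n"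
    unfolding conj_Z_twirl_index[OF V \<rho> rc] w_def \<sigma>_def by simp
  finally show ?thesis
    unfolding \<sigma>_def by simp
qed

lemma conj_M_chan_stabilizer_index:
  assumes V: "unitary_mat (2 ^ n) V" and sgn: "\<forall>a. s a = 1 \<or> s a = -1"
    and S: "pauli_mat n ` S = {s a \<cdot>\<^sub>m (V * Z_op n a * adj V) | a. 0 < a \<and> a < 2 ^ n}"
    and S_finite: "finite S" and S_card: "card S = 2 ^ n - 1"
    and \<rho>: "\<rho> \<in> carrier_mat (2 ^ n) (2 ^ n)" and rc: "r < 2 ^ n" "c < 2 ^ n"
  shows "(V * M_chan n (adj V * \<rho> * V) * adj V) $$ (r, c)
    = ((if r = c then mtrace \<rho> else 0)
       - (\<rho> $$ (r, c) + (\<Sum>P\<in>S. (pauli_mat n P * \<rho> * pauli_mat n P) $$ (r, c))) / 2 ^ n) / (2 ^ n - 1)"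
  unfolding conj_M_chan_index[OF V \<rho> rc] stabilizer_twirl_index[OF V sgn S S_finite S_card \<rho> rc] ..

lemma sum_twirl_terms:
  fixes D e x :: "'a :: field"
  assumes "D \<noteq> 0" "D - 1 \<noteq> 0" "D + 1 \<noteq> 0"
    and card: "of_nat (card J) = D + 1" and sum_q: "(\<Sum>j\<in>J. q j) = D * e - x"
  shows "(\<Sum>j\<in>J. (e - (x + q j) / D) / (D - 1) / (D + 1)) = (D * e - x) / (D\<^sup>2 - 1)"
proof -
  have "D\<^sup>2 - 1 = (D - 1) * (D + 1)"
    by (simp add: power2_eq_square algebra_simps)
  then have summand: "(e - (x + q j) / D) / (D - 1) / (D + 1) = ((D * e - x) - q j) / (D * (D\<^sup>2 - 1))" for j
    using assms(1-3) by (simp add: field_simps)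
  have "(\<Sum>j\<in>J. (e - (x + q j) / D) / (D - 1) / (D + 1))
      = (of_nat (card J) * (D * e - x) - (\<Sum>j\<in>J. q j)) / (D * (D\<^sup>2 - 1))"
    unfolding summand sum_divide_distrib[symmetric] sum_subtractf by (simp add: right_diff_distrib)
  also have "\<dots> = D * (D * e - x) / (D * (D\<^sup>2 - 1))"
    by (simp add: card sum_q algebra_simps)
  also have "\<dots> = (D * e - x) / (D\<^sup>2 - 1)"
    using assms(1) by simp
  finally show ?thesis .
qed

lemma D0_eq_channel_twirl:
  fixes S :: "nat \<Rightarrow> (nat \<Rightarrow> nat) set" and V :: "nat \<Rightarrow> complex mat"
  assumes n: "n \<ge> 1"
    and S_sub: "\<And>j. j \<le> 2 ^ n \<Longrightarrow> S j \<subseteq> pauli_star n"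
    and S_cover: "(\<Union>j\<in>{..2 ^ n}. S j) = pauli_star n"
    and S_disj: "\<And>j j'. j \<le> 2 ^ n \<Longrightarrow> j' \<le> 2 ^ n \<Longrightarrow> j \<noteq> j' \<Longrightarrow> S j \<inter> S j' = {}"
    and S_card: "\<And>j. j \<le> 2 ^ n \<Longrightarrow> card (S j) = 2 ^ n - 1"
    and V_unitary: "\<And>j. j \<le> 2 ^ n \<Longrightarrow> unitary_mat (2 ^ n) (V j)"
    and V_diag: "\<And>j. j \<le> 2 ^ n \<Longrightarrow> \<exists>s :: nat \<Rightarrow> complex. (\<forall>a. s a = 1 \<or> s a = -1) \<and>
                   pauli_mat n ` S j = {s a \<cdot>\<^sub>m (V j * Z_op n a * adj (V j)) | a. 0 < a \<and> a < 2 ^ n}"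
    and \<rho>: "\<rho> \<in> carrier_mat (2 ^ n) (2 ^ n)"
  shows "D0 n \<rho> = channel_twirl (2 ^ n) {..2 ^ n} (\<lambda>_. 1 / (2 ^ n + 1)) (\<lambda>j. adj (V j)) (M_chan n) \<rho>"
proof (rule eq_matI)
  fix r c
  assume "r < dim_row (channel_twirl (2 ^ n) {..2 ^ n} (\<lambda>_. 1 / (2 ^ n + 1)) (\<lambda>j. adj (V j)) (M_chan n) \<rho>)"
    and "c < dim_col (channel_twirl (2 ^ n) {..2 ^ n} (\<lambda>_. 1 / (2 ^ n + 1)) (\<lambda>j. adj (V j)) (M_chan n) \<rho>)"
  then have rc: "r < 2 ^ n" "c < 2 ^ n"
    by (simp_all add: channel_twirl_def)
  define D :: complex where "D = 2 ^ n"
  define e where "e = (if r = c then mtrace \<rho> else 0)"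
  define q where "q j = (\<Sum>P\<in>S j. (pauli_mat n P * \<rho> * pauli_mat n P) $$ (r, c))" for j
  have "(1::nat) < 2 ^ n"
    using n by (intro one_less_power) auto
  then have "of_nat (2 ^ n) \<noteq> (1::complex)"
    by (simp only: of_nat_eq_1_iff)
  moreover have "of_nat (Suc (2 ^ n)) \<noteq> (0::complex)"
    by (rule of_nat_neq_0)
  ultimately have D: "D \<noteq> 0" "D - 1 \<noteq> 0" "D + 1 \<noteq> 0"
    unfolding D_def by (simp_all add: add.commute)
  have S_finite: "finite (S j)" if "j \<le> 2 ^ n" for j
    using S_sub[OF that] finite_pauli_star by (rule finite_subset)
  have entry: "(complex_of_real (1 / (2 ^ n + 1)) \<cdot>\<^sub>m
      (adj (adj (V j)) * M_chan n (adj (V j) * \<rho> * adj (adj (V j))) * adj (V j))) $$ (r, c)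
      = (e - (\<rho> $$ (r, c) + q j) / D) / (D - 1) / (D + 1)" if j: "j \<le> 2 ^ n" for j
  proof -
    obtain s where sgn: "\<forall>a. s a = 1 \<or> s a = -1"
      and PS: "pauli_mat n ` S j = {s a \<cdot>\<^sub>m (V j * Z_op n a * adj (V j)) | a. 0 < a \<and> a < 2 ^ n}"
      using V_diag[OF j] by blast
    have "V j \<in> carrier_mat (2 ^ n) (2 ^ n)"
      using V_unitary[OF j] by (rule unitary_carrier)
    then show ?thesis
      using rc conj_M_chan_stabilizer_index[OF V_unitary[OF j] sgn PS S_finite[OF j] S_card[OF j] \<rho> rc]
      by (simp add: e_def q_def D_def)
  qed
  have sum_q: "(\<Sum>j\<in>{..2 ^ n}. q j) = D * e - \<rho> $$ (r, c)"
  proof -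
    have "(\<Sum>j\<in>{..2 ^ n}. q j) = (\<Sum>P\<in>pauli_star n. (pauli_mat n P * \<rho> * pauli_mat n P) $$ (r, c))"
      unfolding q_def S_cover[symmetric] using S_finite S_disj by (intro sum.UNION_disjoint[symmetric]) auto
    then show ?thesis
      using \<rho> rc by (simp add: pauli_star_twirl_index D_def e_def)
  qed
  have "channel_twirl (2 ^ n) {..2 ^ n} (\<lambda>_. 1 / (2 ^ n + 1)) (\<lambda>j. adj (V j)) (M_chan n) \<rho> $$ (r, c)
      = (\<Sum>j\<in>{..2 ^ n}. (e - (\<rho> $$ (r, c) + q j) / D) / (D - 1) / (D + 1))"
    unfolding channel_twirl_def msum_index[OF rc] by (intro sum.cong refl) (rule entry, simp)
  also have "\<dots> = (D * e - \<rho> $$ (r, c)) / (D\<^sup>2 - 1)"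
    using D sum_q by (intro sum_twirl_terms) (simp_all add: D_def)
  also have "\<dots> = D0 n \<rho> $$ (r, c)"
  proof -
    have "D\<^sup>2 = 2 ^ (2 * n)"
      unfolding D_def by (simp add: power_mult[symmetric] mult.commute)
    then show ?thesis
      using \<rho> rc by (simp add: D0_index D_def e_def)
  qed
  finally show "D0 n \<rho> $$ (r, c) = channel_twirl (2 ^ n) {..2 ^ n} (\<lambda>_. 1 / (2 ^ n + 1)) (\<lambda>j. adj (V j)) (M_chan n) \<rho> $$ (r, c)"
    by simp
qed (simp_all add: channel_twirl_def D0_def)

section \<open>Minimality\<close>

lemma underdetermined_system_nonzero_solution:
  fixes c :: "'l \<Rightarrow> 'i \<Rightarrow> 'a :: field"
  assumes I: "finite I" and L: "finite L" and less: "card L < card I"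
  shows "\<exists>x. (\<exists>i\<in>I. x i \<noteq> 0) \<and> (\<forall>l\<in>L. (\<Sum>i\<in>I. c l i * x i) = 0)"
proof -
  define N where "N = card I"
  obtain f where f: "bij_betw f {..<N} I"
    using ex_bij_betw_nat_finite[OF I] by (auto simp: N_def atLeast0LessThan)
  obtain g where g: "bij_betw g {..<card L} L"
    using ex_bij_betw_nat_finite[OF L] by (auto simp: atLeast0LessThan)
  (* Pad the constraints to a square system whose last row is zero, hence singular. *)
  define row where "row p = (if p < card L then vec N (\<lambda>q. c (g p) (f q)) else 0\<^sub>v N)" for p
  define A where "A = mat\<^sub>r N N (\<lambda>p. if p = N - 1 then 0\<^sub>v N else row p)"
  have "N - 1 < N"
    using less by (simp add: N_def)
  then have "det A = 0"
    unfolding A_def by (rule det_row_0) (simp add: row_def)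
  moreover have A: "A \<in> carrier_mat N N"
    by (simp add: A_def)
  ultimately obtain v where v: "v \<in> carrier_vec N" "v \<noteq> 0\<^sub>v N" "A *\<^sub>v v = 0\<^sub>v N"
    using det_0_iff_vec_prod_zero[OF A] by blast
  define x where "x i = v $ inv_into {..<N} f i" for i
  have x_f: "x (f q) = v $ q" if "q < N" for q
    using inv_into_f_f[OF bij_betw_imp_inj_on[OF f]] that by (simp add: x_def)
  have "\<exists>i\<in>I. x i \<noteq> 0"
  proof -
    have "\<not> (\<forall>q<N. v $ q = 0)"
    proof
      assume "\<forall>q<N. v $ q = 0"
      then have "v = 0\<^sub>v N"
        using v(1) by (intro eq_vecI) auto
      with v(2) show False ..
    qed
    then obtain q where "q < N" "v $ q \<noteq> 0"
      by blast
    moreover have "f q \<in> I"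
      using bij_betw_apply[OF f] \<open>q < N\<close> by simp
    ultimately show ?thesis
      using x_f[of q] by (intro bexI[of _ "f q"]) simp_all
  qed
  moreover have "(\<Sum>i\<in>I. c l i * x i) = 0" if "l \<in> L" for l
  proof -
    have "l \<in> g ` {..<card L}"
      using bij_betw_imp_surj_on[OF g] that by simp
    then obtain p where p: "p < card L" "l = g p"
      by auto
    then have "p < N - 1"
      using less by (simp add: N_def)
    have "(\<Sum>i\<in>I. c l i * x i) = (\<Sum>q<N. c l (f q) * v $ q)"
      using x_f by (simp add: sum.reindex_bij_betw[OF f, symmetric])
    also have "\<dots> = (A *\<^sub>v v) $ p"
      using \<open>p < N - 1\<close> p v(1) by (simp add: A_def row_def scalar_prod_def atLeast0LessThan)
    also have "\<dots> = 0"
      using v(3) \<open>p < N - 1\<close> by simp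
    finally show ?thesis .
  qed
  ultimately show ?thesis
    by blast
qed

lemma traceless_diagonal_eq_0:
  assumes X: "X \<in> carrier_mat d d" and tr: "mtrace X = 0"
    and diag: "\<And>k. k < d - 1 \<Longrightarrow> X $$ (k, k) = 0" and k: "k < d"
  shows "X $$ (k, k) = 0"
proof (cases "k < d - 1")
  case False
  with k have k_last: "k = d - 1"
    by linarith
  have "{..<d} = insert (d - 1) {..<d - 1}"
    using k by auto
  then have "mtrace X = X $$ (d - 1, d - 1)"
    using X diag by (simp add: mtrace_carrier)
  with tr k_last show ?thesis
    by simp
qed (rule diag)

lemma ex_traceless_mat_conj_diagonals_zero:
  assumes d: "2 \<le> d" and m: "m \<le> d" and U: "\<And>i. i < m \<Longrightarrow> unitary_mat d (U i)"
  shows "\<exists>\<rho>\<in>carrier_mat d d. \<rho> \<noteq> 0\<^sub>m d d \<and> mtrace \<rho> = 0 \<and>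
    (\<forall>i<m. \<forall>k<d. (adj (U i) * \<rho> * U i) $$ (k, k) = 0)"
proof -
  (* The last diagonal entry of each U_i^dagger rho U_i is forced by the trace. *)
  define L :: "(nat \<times> nat) option set" where "L = insert None (Some ` ({..<m} \<times> {..<d - 1}))"
  define c :: "(nat \<times> nat) option \<Rightarrow> nat \<times> nat \<Rightarrow> complex" where
    "c l = (case l of
        None \<Rightarrow> (\<lambda>(s, t). if s = t then 1 else 0)
      | Some (i, k) \<Rightarrow> (\<lambda>(s, t). cnj (U i $$ (s, k)) * U i $$ (t, k)))" for l
  have "card L = Suc (m * (d - 1))"
    unfolding L_def by (simp add: card_image card_cartesian_product)
  also have "\<dots> < d * d"
  proof -
    have "m * (d - 1) \<le> d * (d - 1)"
      using m by simp
    moreover have "d * d = d * (d - 1) + d"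
      using d by (cases d) auto
    ultimately show ?thesis
      using d by linarith
  qed
  finally obtain x where nz: "\<exists>i\<in>{..<d} \<times> {..<d}. x i \<noteq> 0"
    and sol: "\<forall>l\<in>L. (\<Sum>i\<in>{..<d} \<times> {..<d}. c l i * x i) = 0"
    using underdetermined_system_nonzero_solution[of "{..<d} \<times> {..<d}" L c] by (auto simp: L_def)
  define \<rho> where "\<rho> = mat d d x"
  have \<rho>c: "\<rho> \<in> carrier_mat d d"
    by (simp add: \<rho>_def)
  have lin: "(\<Sum>s<d. \<Sum>t<d. c l (s, t) * \<rho> $$ (s, t)) = 0" if "l \<in> L" for l
    using sol that by (simp add: \<rho>_def sum.cartesian_product)
  have "\<rho> \<noteq> 0\<^sub>m d d"
    using nz by (auto simp: \<rho>_def mat_eq_iff)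
  moreover have tr: "mtrace \<rho> = 0"
    using lin[of None] \<rho>c by (simp add: L_def c_def mtrace_carrier if_distrib[of "\<lambda>a. a * _"] cong: if_cong)
  moreover have "(adj (U i) * \<rho> * U i) $$ (k, k) = 0" if i: "i < m" and k: "k < d" for i k
  proof -
    have Ui: "U i \<in> carrier_mat d d"
      using U[OF i] by (rule unitary_carrier)
    have reorder: "cnj (U i $$ (s, k')) * \<rho> $$ (s, t) * U i $$ (t, k')
        = cnj (U i $$ (s, k')) * U i $$ (t, k') * \<rho> $$ (s, t)" for s t k'
      by (simp add: ac_simps)
    have diag: "(adj (U i) * \<rho> * U i) $$ (k', k') = 0" if "k' < d - 1" for k'
      using lin[of "Some (i, k')"] i that Ui \<rho>c
      by (simp del: index_mult_mat add: L_def c_def mult3_index_sum[of _ d] adj_index reorder)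
    have "adj (U i) * \<rho> * U i \<in> carrier_mat d d"
      using Ui \<rho>c by auto
    moreover have "mtrace (adj (U i) * \<rho> * U i) = 0"
      using mtrace_unitary_conj[OF U[OF i] \<rho>c] tr by simp
    ultimately show ?thesis
      using diag k by (rule traceless_diagonal_eq_0)
  qed
  ultimately show ?thesis
    using \<rho>c by blast
qed

lemma mp_circuit_eq_0:
  assumes U: "U \<in> carrier_mat (2 ^ n) (2 ^ n)" and \<rho>: "\<rho> \<in> carrier_mat (2 ^ n) (2 ^ n)"
    and \<sigma>: "\<And>k. k < 2 ^ n \<Longrightarrow> \<sigma> k \<in> carrier_mat (2 ^ n) (2 ^ n)"
    and diag: "\<And>k. k < 2 ^ n \<Longrightarrow> (adj U * \<rho> * U) $$ (k, k) = 0"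
  shows "mp_circuit n U \<sigma> \<rho> = 0\<^sub>m (2 ^ n) (2 ^ n)"
proof (rule eq_matI)
  fix r c
  assume "r < dim_row (0\<^sub>m (2 ^ n) (2 ^ n) :: complex mat)" "c < dim_col (0\<^sub>m (2 ^ n) (2 ^ n) :: complex mat)"
  then have rc: "r < 2 ^ n" "c < 2 ^ n"
    by simp_all
  have "adj U * \<rho> * U \<in> carrier_mat (2 ^ n) (2 ^ n)"
    using U \<rho> by auto
  then have "(mtrace (ket_proj (2 ^ n) k * (adj U * \<rho> * U)) \<cdot>\<^sub>m \<sigma> k) $$ (r, c) = 0" if "k < 2 ^ n" for k
    using that diag \<sigma>[OF that] rc by (auto simp: mtrace_ket_proj_mult)
  then show "mp_circuit n U \<sigma> \<rho> $$ (r, c) = 0\<^sub>m (2 ^ n) (2 ^ n) $$ (r, c)"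
    using rc by (simp add: mp_circuit_def msum_index)
qed (simp_all add: mp_circuit_def)

lemma D0_neq_0_if_traceless:
  assumes n: "n \<ge> 1" and \<rho>: "\<rho> \<in> carrier_mat (2 ^ n) (2 ^ n)"
    and nz: "\<rho> \<noteq> 0\<^sub>m (2 ^ n) (2 ^ n)" and tr: "mtrace \<rho> = 0"
  shows "D0 n \<rho> \<noteq> 0\<^sub>m (2 ^ n) (2 ^ n)"
proof
  assume D0_0: "D0 n \<rho> = 0\<^sub>m (2 ^ n) (2 ^ n)"
  have "(2::complex) ^ (2 * n) \<noteq> 1"
  proof -
    have "0 < 2 * n"
      using n by simp
    then have "(1::real) < 2 ^ (2 * n)"
      by (intro one_less_power) simp_all
    then have "complex_of_real (2 ^ (2 * n)) \<noteq> 1"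
      by (simp only: of_real_eq_1_iff)
    then show ?thesis
      by simp
  qed
  have "\<rho> = 0\<^sub>m (2 ^ n) (2 ^ n)"
  proof (rule eq_matI)
    fix r c
    assume "r < dim_row (0\<^sub>m (2 ^ n) (2 ^ n) :: complex mat)" "c < dim_col (0\<^sub>m (2 ^ n) (2 ^ n) :: complex mat)"
    then have rc: "r < 2 ^ n" "c < 2 ^ n"
      by simp_all
    then have "complex_of_real (1 / (2 ^ (2 * n) - 1)) * \<rho> $$ (r, c) = 0"
      using D0_index[OF \<rho> rc] D0_0 rc by (simp add: tr cong: if_cong)
    with \<open>(2::complex) ^ (2 * n) \<noteq> 1\<close> show "\<rho> $$ (r, c) = 0\<^sub>m (2 ^ n) (2 ^ n) $$ (r, c)"
      using rc by simp
  qed (use \<rho> in auto)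
  with nz show False ..
qed

lemma D0_mp_mixture_length_ge:
  fixes U :: "nat \<Rightarrow> complex mat" and \<sigma> :: "nat \<Rightarrow> nat \<Rightarrow> complex mat" and p :: "nat \<Rightarrow> real"
  assumes n: "n \<ge> 1"
    and U: "\<And>i. i < m \<Longrightarrow> unitary_mat (2 ^ n) (U i)"
    and \<sigma>: "\<And>i k. i < m \<Longrightarrow> k < 2 ^ n \<Longrightarrow> \<sigma> i k \<in> carrier_mat (2 ^ n) (2 ^ n)"
    and mix: "\<And>\<rho>. \<rho> \<in> carrier_mat (2 ^ n) (2 ^ n) \<Longrightarrow>
      D0 n \<rho> = msum (2 ^ n) {..<m} (\<lambda>i. complex_of_real (p i) \<cdot>\<^sub>m mp_circuit n (U i) (\<sigma> i) \<rho>)"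
  shows "2 ^ n + 1 \<le> m"
proof (rule ccontr)
  assume "\<not> 2 ^ n + 1 \<le> m"
  then have m: "m \<le> 2 ^ n"
    by simp
  have "2 \<le> (2::nat) ^ n"
    using power_increasing[OF n, of "2::nat"] by simp
  from ex_traceless_mat_conj_diagonals_zero[of "2 ^ n" m U, OF this m U]
  obtain \<rho> where \<rho>: "\<rho> \<in> carrier_mat (2 ^ n) (2 ^ n)" "\<rho> \<noteq> 0\<^sub>m (2 ^ n) (2 ^ n)"
    and tr: "mtrace \<rho> = 0" and diag: "\<forall>i<m. \<forall>k<2 ^ n. (adj (U i) * \<rho> * U i) $$ (k, k) = 0"
    by blast
  have circuits: "mp_circuit n (U i) (\<sigma> i) \<rho> = 0\<^sub>m (2 ^ n) (2 ^ n)" if "i < m" for i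
    using that diag \<rho>(1) U[OF that] \<sigma>[OF that] by (intro mp_circuit_eq_0) (auto simp: unitary_carrier)
  have "D0 n \<rho> = 0\<^sub>m (2 ^ n) (2 ^ n)"
    using mix[OF \<rho>(1)] circuits by (intro eq_matI) (simp_all add: msum_index)
  with D0_neq_0_if_traceless[OF n \<rho> tr] show False ..
qed

theorem lemma1:
  fixes n :: nat and S :: "nat \<Rightarrow> (nat \<Rightarrow> nat) set" and V :: "nat \<Rightarrow> complex mat"
  assumes n: "n \<ge> 1"
    and S_sub: "\<And>j. j \<le> 2 ^ n \<Longrightarrow> S j \<subseteq> pauli_star n"
    and S_cover: "(\<Union>j\<in>{..2 ^ n}. S j) = pauli_star n"
    and S_disj: "\<And>j j'. j \<le> 2 ^ n \<Longrightarrow> j' \<le> 2 ^ n \<Longrightarrow> j \<noteq> j' \<Longrightarrow> S j \<inter> S j' = {}"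
    and S_card: "\<And>j. j \<le> 2 ^ n \<Longrightarrow> card (S j) = 2 ^ n - 1"
    and S_comm: "\<And>j P Q. j \<le> 2 ^ n \<Longrightarrow> P \<in> S j \<Longrightarrow> Q \<in> S j \<Longrightarrow>
                   pauli_mat n P * pauli_mat n Q = pauli_mat n Q * pauli_mat n P"
    and S_max: "\<And>j P. j \<le> 2 ^ n \<Longrightarrow> P \<in> pauli_star n \<Longrightarrow>
                   (\<forall>Q\<in>S j. pauli_mat n P * pauli_mat n Q = pauli_mat n Q * pauli_mat n P) \<Longrightarrow> P \<in> S j"
    and V_unitary: "\<And>j. j \<le> 2 ^ n \<Longrightarrow> unitary_mat (2 ^ n) (V j)"
    and V_diag: "\<And>j. j \<le> 2 ^ n \<Longrightarrow> \<exists>s :: nat \<Rightarrow> complex. (\<forall>a. s a = 1 \<or> s a = -1) \<and>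
                   pauli_mat n ` S j = {s a \<cdot>\<^sub>m (V j * Z_op n a * adj (V j)) | a. 0 < a \<and> a < 2 ^ n}"
  shows "(\<forall>\<rho> \<in> carrier_mat (2 ^ n) (2 ^ n).
            D0 n \<rho> = channel_twirl (2 ^ n) {..2 ^ n} (\<lambda>_. 1 / (2 ^ n + 1)) (\<lambda>j. adj (V j)) (M_chan n) \<rho>)
       \<and> (\<forall>(m :: nat) (p :: nat \<Rightarrow> real) (U :: nat \<Rightarrow> complex mat) (\<sigma> :: nat \<Rightarrow> nat \<Rightarrow> complex mat).
            (\<forall>i<m. p i \<ge> 0) \<and> (\<Sum>i<m. p i) = 1 \<and> (\<forall>i<m. unitary_mat (2 ^ n) (U i)) \<and>
            (\<forall>i<m. \<forall>k<2 ^ n. density_mat (2 ^ n) (\<sigma> i k)) \<and>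
            (\<forall>\<rho> \<in> carrier_mat (2 ^ n) (2 ^ n).
               D0 n \<rho> = msum (2 ^ n) {..<m} (\<lambda>i. complex_of_real (p i) \<cdot>\<^sub>m mp_circuit n (U i) (\<sigma> i) \<rho>))
            \<longrightarrow> 2 ^ n + 1 \<le> m)"
proof (intro conjI ballI allI impI)
  fix \<rho> :: "complex mat"
  assume "\<rho> \<in> carrier_mat (2 ^ n) (2 ^ n)"
  then show "D0 n \<rho> = channel_twirl (2 ^ n) {..2 ^ n} (\<lambda>_. 1 / (2 ^ n + 1)) (\<lambda>j. adj (V j)) (M_chan n) \<rho>"
    using D0_eq_channel_twirl[OF n S_sub S_cover S_disj S_card V_unitary V_diag] by blast
next
  fix m :: nat and p :: "nat \<Rightarrow> real" and U :: "nat \<Rightarrow> complex mat" and \<sigma> :: "nat \<Rightarrow> nat \<Rightarrow> complex mat"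
  assume "(\<forall>i<m. p i \<ge> 0) \<and> (\<Sum>i<m. p i) = 1 \<and> (\<forall>i<m. unitary_mat (2 ^ n) (U i)) \<and>
    (\<forall>i<m. \<forall>k<2 ^ n. density_mat (2 ^ n) (\<sigma> i k)) \<and>
    (\<forall>\<rho> \<in> carrier_mat (2 ^ n) (2 ^ n).
       D0 n \<rho> = msum (2 ^ n) {..<m} (\<lambda>i. complex_of_real (p i) \<cdot>\<^sub>m mp_circuit n (U i) (\<sigma> i) \<rho>))"
  then show "2 ^ n + 1 \<le> m"
    using n by (intro D0_mp_mixture_length_ge[of n m U \<sigma> p]) (auto simp: density_mat_def)
qed

end
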